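(* Let $B>0$, $C>0$ and $\gamma\in[0,1]$ be fixed. For $\alpha\in[0,1/2]$ define $$b_{a}(\alpha)=\frac{\left(-2\alpha^4+5\alpha^3-4\alpha^2+\alpha\right)\gamma+4\alpha^4-9\alpha^3+4\alpha^2}{2\alpha^3-4\alpha^2+1},$$ $$b_{h}(\alpha)=\frac{\left(2\alpha^4-5\alpha^3+4\alpha^2-\alpha\right)\gamma-4\alpha^4+10\alpha^3-6\alpha^2-\alpha+1}{2\alpha^3-4\alpha^2+1},$$ and set $B_{\mathrm{attacker}}(\alpha)=B\,b_a(\alpha)$, $B_{\mathrm{honest}}(\alpha)=B\,b_h(\alpha)$. For $M>0$ and $H>0$ let $\alpha=\frac{M}{H+M}$ and define $$\mathcal{U}^S(H)=B\,\frac{B_{\mathrm{honest}}(\alpha)}{(1-\alpha)B}\cdot\frac{B}{\left(B_{\mathrm{attacker}}(\alpha)+B_{\mathrm{honest}}(\alpha)\right)(H+M)}-C.$$ Then there exists $M_{\max}$ (depending on $\gamma$, $B$, $C$) such that, for $M>0$, there exists $H^*$ with $H^*>M$ and $\mathcal{U}^S(H^* )=0$ if and only if $M\le M_{\max}$.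
   Context: Model of selfish mining (in the sense of Eyal and Sirer) with elastic hash supply. $B$ is the expected reward per block, $C$ the expected cost of mining per unit of hash rate until some miner finds a block, $H$ the total hash rate of honest miners, $M$ the hash rate of the selfish-mining attacking pool, $\gamma$ the fraction of honest miners that mine on the attacking pool's block during a tie. $\alpha=M/(H+M)$ is the attacker's share of total hash rate. $B_{\mathrm{attacker}}$ and $B_{\mathrm{honest}}$ are the expected rewards of the attacker and honest miners per block discovery (including hidden ones), and $\mathcal{U}^S(H)$ is the honest miners' profit per unit hash rate under the selfish mining attack after difficulty adjustment. An equilibrium honest hash supply is a value $H^*$ with $\mathcal{U}^S(H^* )=0$. *)

theory Defs
  imports Complex_Main
begin

definition b_a :: "real \<Rightarrow> real \<Rightarrow> real" where
  "b_a \<gamma> \<alpha> =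
     ((-2*\<alpha>^4 + 5*\<alpha>^3 - 4*\<alpha>^2 + \<alpha>) * \<gamma> + 4*\<alpha>^4 - 9*\<alpha>^3 + 4*\<alpha>^2)
     / (2*\<alpha>^3 - 4*\<alpha>^2 + 1)"

definition b_h :: "real \<Rightarrow> real \<Rightarrow> real" where
  "b_h \<gamma> \<alpha> =
     ((2*\<alpha>^4 - 5*\<alpha>^3 + 4*\<alpha>^2 - \<alpha>) * \<gamma> - 4*\<alpha>^4 + 10*\<alpha>^3 - 6*\<alpha>^2 - \<alpha> + 1)
     / (2*\<alpha>^3 - 4*\<alpha>^2 + 1)"

definition B_attacker :: "real \<Rightarrow> real \<Rightarrow> real \<Rightarrow> real" where
  "B_attacker B \<gamma> \<alpha> = B * b_a \<gamma> \<alpha>"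

definition B_honest :: "real \<Rightarrow> real \<Rightarrow> real \<Rightarrow> real" where
  "B_honest B \<gamma> \<alpha> = B * b_h \<gamma> \<alpha>"

definition U_S :: "real \<Rightarrow> real \<Rightarrow> real \<Rightarrow> real \<Rightarrow> real \<Rightarrow> real" where
  "U_S B C \<gamma> M H =
     (let \<alpha> = M / (H + M) in
        B * (B_honest B \<gamma> \<alpha> / ((1 - \<alpha>) * B))
          * (B / ((B_attacker B \<gamma> \<alpha> + B_honest B \<gamma> \<alpha>) * (H + M))) - C)"

end

theory Submission
  imports Defs
begin

text \<open>After the B's cancel, \<open>U_S B C \<gamma> M H + C\<close> is \<open>B / M\<close> times a continuous function of
  \<open>\<alpha> = M / (H + M)\<close> alone, and \<open>H > M\<close> corresponds exactly to \<open>\<alpha> \<in> (0, 1/2)\<close>. This function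
  vanishes at both ends of \<open>[0, 1/2]\<close>, so by the intermediate value theorem its positive values
  on \<open>(0, 1/2)\<close> form the interval \<open>(0, m]\<close>, \<open>m\<close> its maximum; hence \<open>M_max = B m / C\<close>.
  The argument works for every \<open>\<gamma>\<close>; the bounds \<open>0 \<le> \<gamma> \<le> 1\<close> only serve to make \<open>M_max\<close>
  positive, which the theorem does not claim.\<close>

lemma continuous_on_Icc_positive_values:
  fixes f :: "real \<Rightarrow> real"
  assumes "a \<le> b" and cont: "continuous_on {a..b} f" and "f a \<le> 0" and "f b \<le> 0"
  shows "\<exists>m. \<forall>t>0. (\<exists>x\<in>{a<..<b}. f x = t) \<longleftrightarrow> t \<le> m"
proof -
  obtain x\<^sub>0 where x\<^sub>0: "x\<^sub>0 \<in> {a..b}" and max: "\<And>x. x \<in> {a..b} \<Longrightarrow> f x \<le> f x\<^sub>0"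
    using continuous_attains_sup[OF compact_Icc _ cont] \<open>a \<le> b\<close> by auto
  have "(\<exists>x\<in>{a<..<b}. f x = t) \<longleftrightarrow> t \<le> f x\<^sub>0" if "t > 0" for t
  proof
    assume "t \<le> f x\<^sub>0"
    have "continuous_on {a..x\<^sub>0} f"
      using cont x\<^sub>0 by (auto elim: continuous_on_subset)
    then obtain x where x: "a \<le> x" "x \<le> x\<^sub>0" "f x = t"
      using IVT'[of f a t x\<^sub>0] \<open>f a \<le> 0\<close> \<open>t > 0\<close> \<open>t \<le> f x\<^sub>0\<close> x\<^sub>0 by auto
    have "x \<noteq> a" "x \<noteq> b"
      using x x\<^sub>0 \<open>f a \<le> 0\<close> \<open>f b \<le> 0\<close> \<open>t > 0\<close> by auto
    with x x\<^sub>0 show "\<exists>x\<in>{a<..<b}. f x = t"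
      by auto
  qed (use max in auto)
  then show ?thesis
    by blast
qed

lemma half_interval_cubic_pos:
  fixes \<alpha> c k :: real
  assumes "0 \<le> \<alpha>" "\<alpha> \<le> 1/2" "0 < c" "0 \<le> k"
  shows "(1 - 2*\<alpha>) * (1 + k*\<alpha>) + c*\<alpha>^3 > 0"
proof (cases "\<alpha> = 1/2")
  case False
  with assms show ?thesis by (simp add: add_pos_nonneg)
next
  case True
  show ?thesis using assms by (simp add: True)
qed

definition honest_share :: "real \<Rightarrow> real \<Rightarrow> real" where
  "honest_share \<gamma> \<alpha> = b_h \<gamma> \<alpha> / (b_a \<gamma> \<alpha> + b_h \<gamma> \<alpha>)"

definition honest_yield :: "real \<Rightarrow> real \<Rightarrow> real" where
  "honest_yield \<gamma> \<alpha> = \<alpha> / (1 - \<alpha>) * honest_share \<gamma> \<alpha>"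

lemma U_S_eq_honest_yield:
  assumes "B \<noteq> 0" and "M \<noteq> 0" and "H + M \<noteq> 0"
  shows "U_S B C \<gamma> M H = B * honest_yield \<gamma> (M / (H + M)) / M - C"
proof -
  define \<alpha> where "\<alpha> = M / (H + M)"
  have "1 - \<alpha> = H / (H + M)"
    using assms by (simp add: \<alpha>_def field_simps)
  then have "U_S B C \<gamma> M H = B * b_h \<gamma> \<alpha> / (H * (b_a \<gamma> \<alpha> + b_h \<gamma> \<alpha>)) - C"
    using assms
    by (simp add: U_S_def B_attacker_def B_honest_def \<alpha>_def[symmetric] distrib_left[symmetric])
  also have "\<dots> = B * honest_yield \<gamma> \<alpha> / M - C"
    using assms \<open>1 - \<alpha> = H / (H + M)\<close> by (simp add: honest_yield_def honest_share_def \<alpha>_def)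
  finally show ?thesis
    by (simp add: \<alpha>_def)
qed

lemma honest_share_eq:
  assumes "0 \<le> \<alpha>" "\<alpha> \<le> 1/2"
  shows "honest_share \<gamma> \<alpha> =
    ((2*\<alpha>^4 - 5*\<alpha>^3 + 4*\<alpha>^2 - \<alpha>) * \<gamma> - 4*\<alpha>^4 + 10*\<alpha>^3 - 6*\<alpha>^2 - \<alpha> + 1)
    / (\<alpha>^3 - 2*\<alpha>^2 - \<alpha> + 1)"
proof -
  have "(1 - 2*\<alpha>) * (1 + 2*\<alpha>) + 2*\<alpha>^3 > 0"
    using assms by (rule half_interval_cubic_pos) auto
  then have "2*\<alpha>^3 - 4*\<alpha>^2 + 1 \<noteq> 0"
    by (simp add: algebra_simps power2_eq_square)
  then show ?thesis
    unfolding honest_share_def b_a_def b_h_def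
    by (simp add: add_divide_distrib[symmetric]) (simp add: algebra_simps)
qed

lemma continuous_on_honest_yield: "continuous_on {0..1/2} (honest_yield \<gamma>)"
proof -
  have "\<alpha>^3 - 2*\<alpha>^2 - \<alpha> + 1 \<noteq> 0" if "\<alpha> \<in> {0..1/2}" for \<alpha> :: real
  proof -
    have "(1 - 2*\<alpha>) * (1 + \<alpha>) + \<alpha>^3 > 0"
      using that by (intro half_interval_cubic_pos[where c = 1 and k = 1, simplified]) auto
    then show ?thesis
      by (simp add: algebra_simps power2_eq_square)
  qed
  then have "continuous_on {0..1/2} (\<lambda>\<alpha>. \<alpha> / (1 - \<alpha>) *
    (((2*\<alpha>^4 - 5*\<alpha>^3 + 4*\<alpha>^2 - \<alpha>) * \<gamma> - 4*\<alpha>^4 + 10*\<alpha>^3 - 6*\<alpha>^2 - \<alpha> + 1)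
      / (\<alpha>^3 - 2*\<alpha>^2 - \<alpha> + 1)))"
    by (intro continuous_intros) auto
  then show ?thesis
    by (rule continuous_on_cong[THEN iffD1, rotated 2])
      (simp_all add: honest_yield_def honest_share_eq)
qed

lemma honest_yield_0: "honest_yield \<gamma> 0 = 0"
  by (simp add: honest_yield_def)

lemma honest_yield_half: "honest_yield \<gamma> (1/2) = 0"
  by (simp add: honest_yield_def honest_share_eq eval_nat_numeral)

lemma U_S_root_iff:
  assumes "B > 0" and "M > 0"
  shows "(\<exists>H>M. U_S B C \<gamma> M H = 0) \<longleftrightarrow> (\<exists>\<alpha>\<in>{0<..<1/2}. honest_yield \<gamma> \<alpha> = C * M / B)"
proof
  assume "\<exists>H>M. U_S B C \<gamma> M H = 0"
  then obtain H where "H > M" and "U_S B C \<gamma> M H = 0"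
    by blast
  then have "honest_yield \<gamma> (M / (H + M)) = C * M / B"
    using assms U_S_eq_honest_yield[of B M H C \<gamma>] by (simp add: field_simps)
  moreover have "M / (H + M) \<in> {0<..<1/2}"
    using assms \<open>H > M\<close> by (simp add: field_simps)
  ultimately show "\<exists>\<alpha>\<in>{0<..<1/2}. honest_yield \<gamma> \<alpha> = C * M / B"
    by blast
next
  assume "\<exists>\<alpha>\<in>{0<..<1/2}. honest_yield \<gamma> \<alpha> = C * M / B"
  then obtain \<alpha> where \<alpha>: "0 < \<alpha>" "\<alpha> < 1/2" and yield: "honest_yield \<gamma> \<alpha> = C * M / B"
    by auto
  define H where "H = M * (1 - \<alpha>) / \<alpha>"
  have "H > M" and "M / (H + M) = \<alpha>"
    using \<alpha> assms by (simp_all add: H_def field_simps)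
  moreover have "U_S B C \<gamma> M H = 0"
    using U_S_eq_honest_yield[of B M H C \<gamma>] \<open>H > M\<close> \<open>M / (H + M) = \<alpha>\<close> yield assms by simp
  ultimately show "\<exists>H>M. U_S B C \<gamma> M H = 0"
    by blast
qed

theorem theorem1:
  fixes B C \<gamma> :: real
  assumes "B > 0" and "C > 0" and "0 \<le> \<gamma>" and "\<gamma> \<le> 1"
  shows "\<exists>M_max::real. \<forall>M::real. M > 0 \<longrightarrow>
           ((\<exists>H. H > M \<and> U_S B C \<gamma> M H = 0) \<longleftrightarrow> M \<le> M_max)"
proof -
  obtain m where m: "\<And>t. t > 0 \<Longrightarrow> (\<exists>\<alpha>\<in>{0<..<1/2}. honest_yield \<gamma> \<alpha> = t) \<longleftrightarrow> t \<le> m"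
    using continuous_on_Icc_positive_values[OF _ continuous_on_honest_yield]
      honest_yield_0 honest_yield_half by force
  have "(\<exists>H>M. U_S B C \<gamma> M H = 0) \<longleftrightarrow> M \<le> B * m / C" if "M > 0" for M
  proof -
    have "(\<exists>H>M. U_S B C \<gamma> M H = 0) \<longleftrightarrow> C * M / B \<le> m"
      using U_S_root_iff[of B M C \<gamma>] m[of "C * M / B"] assms that by simp
    also have "\<dots> \<longleftrightarrow> M \<le> B * m / C"
      using assms by (simp add: field_simps)
    finally show ?thesis .
  qed
  then show ?thesis
    by blast
qed

end
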